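(* For all $t\ge1$, $r\in[-1,1]$ and $w\in\mathbb{R}^3\setminus\{0\}$ we have $\kappa(a_tu_rw)\ge 1$ if $\kappa(w)\ge e^{-2t}$, and $\kappa(a_tu_rw)\ge e^{2t}\kappa(w)$ if $\kappa(w)<e^{-2t}$. Furthermore, if $\kappa(a_tu_rw)<1$ then $\kappa(a_tu_rw)=e^{2t}\kappa(w)$.
   Context: $Q_0(v)=v_2^2-2v_1v_3$, $a_t=\mathrm{diag}(e^t,1,e^{-t})$, $u_r=\begin{pmatrix}1&r&r^2/2\\0&1&r\\0&0&1\end{pmatrix}$. For $w=(w_1,w_2,w_3)\ne0$: if $w_2=w_3=0$, set $\rho(w)=\infty$, $\kappa_0(w)=\infty$, $\kappa(w)=1$. Otherwise $\rho(w)=-w_2/w_3\in[-\infty,\infty]$, $\kappa_0(w)=Q_0(w)/w_3^2\in[-\infty,\infty]$, and $\kappa(w)=|\kappa_0(w)|$ if $|\kappa_0(w)|<1$ and $|\rho(w)|<2$, while $\kappa(w)=1$ otherwise. *)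

theory Defs
  imports "HOL-Analysis.Analysis" "HOL-Library.Extended_Real"
begin

definition Q0 :: "real^3 \<Rightarrow> real" where
  "Q0 v = (v$2)^2 - 2 * (v$1) * (v$3)"

definition a_mat :: "real \<Rightarrow> real^3^3" where
  "a_mat t = vector [vector [exp t, 0, 0], vector [0, 1, 0], vector [0, 0, exp (-t)]]"

definition u_mat :: "real \<Rightarrow> real^3^3" where
  "u_mat r = vector [vector [1, r, r^2/2], vector [0, 1, r], vector [0, 0, 1]]"

text \<open>rho w = -w2/w3 in the extended reals; for w3 = 0 it is infinite
  (the point at infinity; only its absolute value is used).\<close>
definition rho :: "real^3 \<Rightarrow> ereal" where
  "rho w = (if w$3 = 0 then \<infinity> else ereal (- (w$2) / (w$3)))"

text \<open>kappa0 w = Q0(w)/w3^2; for w3 = 0 (w2 nonzero) Q0(w) = w2^2 > 0, so it is +infinity;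
  for w2 = w3 = 0 it is set to infinity by definition.\<close>
definition kappa0 :: "real^3 \<Rightarrow> ereal" where
  "kappa0 w = (if w$3 = 0 then \<infinity> else ereal (Q0 w / (w$3)^2))"

definition kappa :: "real^3 \<Rightarrow> real" where
  "kappa w = (if (w$2 = 0 \<and> w$3 = 0) then 1
              else if \<bar>kappa0 w\<bar> < 1 \<and> \<bar>rho w\<bar> < 2 then real_of_ereal \<bar>kappa0 w\<bar> else 1)"

end

theory Submission
  imports Defs
begin

text \<open>Both \<open>a\<^sub>t\<close> and \<open>u\<^sub>r\<close> preserve \<open>Q\<^sub>0\<close>, while \<open>a\<^sub>t u\<^sub>r\<close> multiplies \<open>w\<^sub>3\<close> by \<open>e\<^sup>-\<^sup>t\<close>; hence \<open>\<kappa>\<^sub>0\<close> is multiplied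
  by \<open>e\<^sup>2\<^sup>t\<close> and \<open>\<rho>\<close> is replaced by \<open>e\<^sup>t(\<rho> - r)\<close>. So \<open>\<kappa>(a\<^sub>t u\<^sub>r w)\<close> is either \<open>1\<close> or \<open>e\<^sup>2\<^sup>t \<kappa>(w)\<close>: if
  \<open>|e\<^sup>t(\<rho> - r)| < 2\<close> and \<open>e\<^sup>t \<ge> 2\<close>, then \<open>|\<rho> - r| < 1\<close>, so \<open>|\<rho>| < 2\<close> for \<open>|r| \<le> 1\<close>, and \<open>|\<kappa>\<^sub>0(w)| < 1\<close>
  is implied by \<open>|e\<^sup>2\<^sup>t \<kappa>\<^sub>0(w)| < 1\<close>. Since \<open>\<kappa> \<le> 1\<close>, all three claims follow.\<close>

lemma a_mat_mult_nth:
  fixes v :: "real^3"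
  shows "(a_mat t *v v)$1 = exp t * v$1" "(a_mat t *v v)$2 = v$2" "(a_mat t *v v)$3 = exp (-t) * v$3"
  by (simp_all add: a_mat_def matrix_vector_mult_def sum_3)

lemma u_mat_mult_nth:
  fixes v :: "real^3"
  shows "(u_mat r *v v)$1 = v$1 + r * v$2 + r^2 / 2 * v$3" "(u_mat r *v v)$2 = v$2 + r * v$3"
    "(u_mat r *v v)$3 = v$3"
  by (simp_all add: u_mat_def matrix_vector_mult_def sum_3)

lemma Q0_a_mat_mult: "Q0 (a_mat t *v v) = Q0 v"
  by (simp add: Q0_def a_mat_mult_nth exp_minus field_simps)

lemma Q0_u_mat_mult: "Q0 (u_mat r *v v) = Q0 v"
  by (simp add: Q0_def u_mat_mult_nth algebra_simps power2_eq_square)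

lemma kappa_eq:
  "kappa w = (if w$3 \<noteq> 0 \<and> \<bar>Q0 w / (w$3)^2\<bar> < 1 \<and> \<bar>w$2 / w$3\<bar> < 2 then \<bar>Q0 w / (w$3)^2\<bar> else 1)"
  by (simp add: kappa_def kappa0_def rho_def)

lemma kappa_le_1: "kappa w \<le> 1"
  unfolding kappa_eq by (split if_split) linarith

lemma kappa_a_mat_u_mat_cases:
  fixes w :: "real^3"
  assumes "2 \<le> exp t" and "\<bar>r\<bar> \<le> 1"
  shows "kappa (a_mat t *v (u_mat r *v w)) = 1 \<or> kappa (a_mat t *v (u_mat r *v w)) = exp (2*t) * kappa w"
proof (cases "w$3 = 0 \<or> kappa (a_mat t *v (u_mat r *v w)) = 1")
  case True
  then show ?thesis
    by (auto simp: kappa_eq a_mat_mult_nth u_mat_mult_nth)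
next
  case False
  define v where "v = a_mat t *v (u_mat r *v w)"
  define k where "k = Q0 w / (w$3)^2"
  define \<rho> where "\<rho> = - w$2 / w$3"
  have w3: "w$3 \<noteq> 0" and "kappa v \<noteq> 1"
    using False by (simp_all add: v_def)
  have v3: "v$3 = exp (-t) * w$3" and v2: "v$2 = w$2 + r * w$3" and "Q0 v = Q0 w"
    by (simp_all add: v_def a_mat_mult_nth u_mat_mult_nth Q0_a_mat_mult Q0_u_mat_mult)
  have exp_2t: "exp (2*t) = exp t ^ 2"
    by (simp add: power2_eq_square flip: exp_add)
  have kv: "Q0 v / (v$3)^2 = exp (2*t) * k"
    unfolding exp_2t using w3 by (simp add: \<open>Q0 v = Q0 w\<close> v3 k_def exp_minus
        power_mult_distrib field_simps)
  have \<rho>v: "- v$2 / v$3 = exp t * (\<rho> - r)"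
    using w3 by (simp add: v2 v3 \<rho>_def exp_minus field_simps)
  have kappa_v: "kappa v = \<bar>exp (2*t) * k\<bar>" and close: "\<bar>exp (2*t) * k\<bar> < 1" "\<bar>exp t * (\<rho> - r)\<bar> < 2"
    using \<open>kappa v \<noteq> 1\<close> by (auto simp: kappa_eq kv \<rho>v [symmetric] split: if_splits)
  have "1 \<le> exp (2*t)"
    unfolding exp_2t using assms(1) by (intro one_le_power) linarith
  then have "\<bar>k\<bar> \<le> \<bar>exp (2*t) * k\<bar>"
    by (simp add: abs_mult mult_le_cancel_right1)
  then have "\<bar>k\<bar> < 1"
    using close(1) by linarith
  moreover have "2 * \<bar>\<rho> - r\<bar> \<le> exp t * \<bar>\<rho> - r\<bar>"
    using assms(1) by (simp add: mult_right_mono)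
  then have "\<bar>\<rho> - r\<bar> < 1"
    using close(2) by (simp add: abs_mult)
  then have "\<bar>\<rho>\<bar> < 2"
    using assms(2) by linarith
  ultimately have "kappa w = \<bar>k\<bar>"
    using w3 by (simp add: kappa_eq k_def \<rho>_def)
  then show ?thesis
    by (simp add: v_def [symmetric] kappa_v abs_mult)
qed

theorem lemma3p7:
  fixes t r :: real and w :: "real^3"
  assumes "t \<ge> 1" and "r \<in> {-1..1}" and "w \<noteq> 0"
  shows "(kappa w \<ge> exp (-2*t) \<longrightarrow> kappa (a_mat t *v (u_mat r *v w)) \<ge> 1)
       \<and> (kappa w < exp (-2*t) \<longrightarrow> kappa (a_mat t *v (u_mat r *v w)) \<ge> exp (2*t) * kappa w)
       \<and> (kappa (a_mat t *v (u_mat r *v w)) < 1 \<longrightarrow> kappa (a_mat t *v (u_mat r *v w)) = exp (2*t) * kappa w)"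
proof -
  define v where "v = a_mat t *v (u_mat r *v w)"
  have "2 \<le> exp t"
    using assms(1) exp_ge_add_one_self [of t] by linarith
  moreover have "\<bar>r\<bar> \<le> 1"
    using assms(2) by auto
  ultimately have cases: "kappa v = 1 \<or> kappa v = exp (2*t) * kappa w"
    unfolding v_def by (rule kappa_a_mat_u_mat_cases)
  have "exp (-2*t) \<le> kappa w \<longleftrightarrow> 1 \<le> exp (2*t) * kappa w"
    by (simp add: exp_minus field_simps)
  with cases kappa_le_1 [of v] show ?thesis
    unfolding v_def [symmetric] by auto
qed

end
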